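(* Let $f\in C^1(\mathbb{R}^N)$ have a gradient satisfying $\|\nabla f(x)-\nabla f(y)\|\le c\|x-y\|$ for all $x,y$. Suppose the set $S=\{x:\nabla f(x)=0\}$ is bounded and has only finitely many connected components $S_1,\dots,S_m$, that $f$ takes a constant value $f_i$ on each $S_i$, and that there exists $\epsilon_1'>0$ such that for every $i=1,\dots,m$ and every $x$ with $0<d(x,S_i)<\epsilon_1'$ we have $f(x)\neq f_i$. Then there exists $\epsilon_0'>0$ such that for every $i=1,\dots,m$ and every $x$ with $d(x,S_i)<\epsilon_0'$, $$\|\nabla f(x)\|^2\le 2c\,|f(x)-f_i|.$$
   Context: $d(x,A)=\inf\{\|x-y\|:y\in A\}$, with $\|\cdot\|$ the Euclidean norm. *)

theory Defs
  imports "HOL-Analysis.Analysis"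
begin

end

theory Submission imports Defs begin

text \<open>
  Suppose \<open>\<parallel>\<nabla>f(x)\<parallel>\<^sup>2 > 2c\<bar>f(x) - f\<^sub>i\<bar>\<close>, put \<open>r = \<parallel>\<nabla>f(x)\<parallel>/c\<close> and let \<open>u\<close> be the unit
  gradient direction. By the descent lemma \<open>f(x - r u) \<le> f(x) - \<parallel>\<nabla>f(x)\<parallel>\<^sup>2/(2c)\<close> and
  \<open>f(x + r u) \<ge> f(x) + \<parallel>\<nabla>f(x)\<parallel>\<^sup>2/(2c)\<close>, so by the intermediate value theorem \<open>f\<close> takes
  the value \<open>f\<^sub>i\<close> at some \<open>z\<close> with \<open>\<parallel>z - x\<parallel> < r\<close>. The gradient cannot vanish on that
  ball, so \<open>z \<notin> S\<^sub>i\<close>; and as it vanishes on \<open>S\<^sub>i\<close>, \<open>r \<le> d(x, S\<^sub>i)\<close>, whence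
  \<open>0 < d(z, S\<^sub>i) < 2 d(x, S\<^sub>i)\<close>. This contradicts the separation hypothesis as soon as
  \<open>d(x, S\<^sub>i) < \<epsilon>\<^sub>1'/2\<close>.
\<close>

lemma lipschitz_gradient_lower_bound:
  fixes f :: "'a::real_inner \<Rightarrow> real"
  assumes deriv: "\<And>x. (f has_derivative (\<lambda>h. g x \<bullet> h)) (at x)"
    and lip: "\<And>x y. norm (g x - g y) \<le> c * norm (x - y)"
  shows "f x + g x \<bullet> y - c / 2 * (norm y)\<^sup>2 \<le> f (x + y)"
proof -
  define \<psi> where "\<psi> = (\<lambda>s. f (x + s *\<^sub>R y) - s * (g x \<bullet> y) + c / 2 * s\<^sup>2 * (norm y)\<^sup>2)"
  have \<psi>': "(\<psi> has_real_derivative (g (x + s *\<^sub>R y) - g x) \<bullet> y + c * s * (norm y)\<^sup>2) (at s)" for s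
  proof -
    have "((\<lambda>s. f (x + s *\<^sub>R y)) has_derivative (\<lambda>h. g (x + s *\<^sub>R y) \<bullet> (h *\<^sub>R y))) (at s)"
      by (rule has_derivative_compose[OF _ deriv]) (auto intro!: derivative_eq_intros)
    then have "((\<lambda>s. f (x + s *\<^sub>R y)) has_real_derivative g (x + s *\<^sub>R y) \<bullet> y) (at s)"
      by (simp add: has_field_derivative_def mult.commute[of _ "g (x + s *\<^sub>R y) \<bullet> y"])
    moreover have "((\<lambda>s. s * (g x \<bullet> y)) has_real_derivative g x \<bullet> y) (at s)"
      by (auto intro!: derivative_eq_intros)
    moreover have "((\<lambda>s. c / 2 * s\<^sup>2 * (norm y)\<^sup>2) has_real_derivative c * s * (norm y)\<^sup>2) (at s)"
      by (auto intro!: derivative_eq_intros)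
    ultimately have "(\<psi> has_real_derivative g (x + s *\<^sub>R y) \<bullet> y - g x \<bullet> y + c * s * (norm y)\<^sup>2) (at s)"
      unfolding \<psi>_def by (intro DERIV_add DERIV_diff)
    then show ?thesis
      by (simp add: inner_diff_left)
  qed
  have \<psi>'_nonneg: "0 \<le> (g (x + s *\<^sub>R y) - g x) \<bullet> y + c * s * (norm y)\<^sup>2" if "0 \<le> s" for s
  proof -
    have "\<bar>(g (x + s *\<^sub>R y) - g x) \<bullet> y\<bar> \<le> norm (g (x + s *\<^sub>R y) - g x) * norm y"
      by (rule Cauchy_Schwarz_ineq2)
    also have "\<dots> \<le> c * norm (s *\<^sub>R y) * norm y"
      using lip[of "x + s *\<^sub>R y" x] by (intro mult_right_mono) simp_all
    also have "\<dots> = c * s * (norm y)\<^sup>2"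
      using that by (simp add: power2_eq_square)
    finally show ?thesis by linarith
  qed
  have "\<psi> 0 \<le> \<psi> 1"
  proof (rule DERIV_nonneg_imp_nondecreasing[of 0 1 \<psi>])
    show "\<exists>d. (\<psi> has_real_derivative d) (at s) \<and> 0 \<le> d" if "0 \<le> s" "s \<le> 1" for s
      using \<psi>' \<psi>'_nonneg[OF \<open>0 \<le> s\<close>] by blast
  qed simp
  then show ?thesis
    unfolding \<psi>_def by simp
qed

lemma lipschitz_gradient_upper_bound:
  fixes f :: "'a::real_inner \<Rightarrow> real"
  assumes deriv: "\<And>x. (f has_derivative (\<lambda>h. g x \<bullet> h)) (at x)"
    and lip: "\<And>x y. norm (g x - g y) \<le> c * norm (x - y)"
  shows "f (x + y) \<le> f x + g x \<bullet> y + c / 2 * (norm y)\<^sup>2"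
proof -
  have "((\<lambda>x. - f x) has_derivative (\<lambda>h. - g x \<bullet> h)) (at x)" for x
    using has_derivative_minus[OF deriv[of x]] by simp
  moreover have "norm (- g x - - g y) \<le> c * norm (x - y)" for x y
    using lip[of x y] by (simp add: norm_minus_commute)
  ultimately show ?thesis
    using lipschitz_gradient_lower_bound[of "\<lambda>x. - f x" "\<lambda>x. - g x" c x y] by simp
qed

lemma lipschitz_gradient_attains_nearby_value:
  fixes f :: "'a::real_inner \<Rightarrow> real"
  assumes deriv: "\<And>x. (f has_derivative (\<lambda>h. g x \<bullet> h)) (at x)"
    and lip: "\<And>x y. norm (g x - g y) \<le> c * norm (x - y)"
    and "0 < c"
    and gap: "2 * c * \<bar>f x - a\<bar> < (norm (g x))\<^sup>2"
  shows "\<exists>z. c * dist x z < norm (g x) \<and> f z = a"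
proof -
  define n where "n = norm (g x)"
  define r where "r = n / c"
  define u where "u = g x /\<^sub>R n"
  have "g x \<noteq> 0"
    using gap \<open>0 < c\<close> by (auto simp: mult_less_0_iff)
  then have "0 < n"
    by (simp add: n_def)
  then have "0 < r" and u: "norm u = 1" "g x \<bullet> u = n"
    using \<open>0 < c\<close> by (auto simp: r_def u_def n_def dot_square_norm power2_eq_square)
  have rn: "r * n - c * r\<^sup>2 / 2 = n\<^sup>2 / (2 * c)"
    using \<open>0 < c\<close> by (simp add: r_def field_simps power2_eq_square)
  define \<gamma> where "\<gamma> t = f (x + t *\<^sub>R u)" for t
  have "\<gamma> (- r) \<le> f x - n\<^sup>2 / (2 * c)"
    using lipschitz_gradient_upper_bound[OF deriv lip, of x "- r *\<^sub>R u"] u rn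
    by (simp add: \<gamma>_def abs_of_pos[OF \<open>0 < r\<close>])
  moreover have "f x + n\<^sup>2 / (2 * c) \<le> \<gamma> r"
    using lipschitz_gradient_lower_bound[OF deriv lip, of x "r *\<^sub>R u"] u rn
    by (simp add: \<gamma>_def abs_of_pos[OF \<open>0 < r\<close>])
  moreover have "\<bar>f x - a\<bar> < n\<^sup>2 / (2 * c)"
    using gap \<open>0 < c\<close> by (simp add: n_def field_simps)
  ultimately have ends: "\<gamma> (- r) < a" "a < \<gamma> r"
    by auto
  have "continuous_on UNIV f"
    using deriv has_derivative_continuous continuous_at_imp_continuous_on by blast
  then have "continuous_on {- r..r} \<gamma>"
    unfolding \<gamma>_def by (rule continuous_on_compose2) (auto intro!: continuous_intros)
  then obtain t where "- r \<le> t" "t \<le> r" "\<gamma> t = a"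
    using IVT'[of \<gamma> "- r" a r] ends \<open>0 < r\<close> by auto
  with ends have "\<bar>t\<bar> < r"
    by (cases "t = r \<or> t = - r") auto
  then have "c * \<bar>t\<bar> < n"
    using \<open>0 < c\<close> by (simp add: r_def field_simps)
  then show ?thesis
    using \<open>\<gamma> t = a\<close> u by (intro exI[of _ "x + t *\<^sub>R u"]) (simp add: \<gamma>_def dist_norm n_def)
qed

lemma lipschitz_gradient_norm_sq_le_near_zero_set:
  fixes f :: "'a::euclidean_space \<Rightarrow> real"
  assumes deriv: "\<And>x. (f has_derivative (\<lambda>h. g x \<bullet> h)) (at x)"
    and lip: "\<And>x y. norm (g x - g y) \<le> c * norm (x - y)"
    and "closed C" "C \<noteq> {}" and zero: "\<And>y. y \<in> C \<Longrightarrow> g y = 0"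
    and sep: "\<And>z. 0 < infdist z C \<Longrightarrow> infdist z C < e \<Longrightarrow> f z \<noteq> a"
    and near: "infdist x C < e / 2"
  shows "(norm (g x))\<^sup>2 \<le> 2 * c * \<bar>f x - a\<bar>"
proof (rule ccontr)
  assume "\<not> ?thesis"
  then have gap: "2 * c * \<bar>f x - a\<bar> < (norm (g x))\<^sup>2"
    by simp
  obtain b :: 'a where "b \<in> Basis"
    using nonempty_Basis by blast
  then have "norm (g b - g 0) \<le> c"
    using lip[of b 0] by simp
  then have "0 \<le> c"
    by (meson norm_ge_zero order_trans)
  obtain y where "y \<in> C" and y: "infdist x C = dist x y"
    using infdist_attains_inf[OF \<open>closed C\<close> \<open>C \<noteq> {}\<close>] by metis
  have n_le: "norm (g x) \<le> c * infdist x C"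
    using lip[of x y] zero[OF \<open>y \<in> C\<close>] y by (simp add: dist_norm)
  have "g x \<noteq> 0"
    using gap \<open>0 \<le> c\<close> by (auto simp: mult_less_0_iff)
  with n_le \<open>0 \<le> c\<close> have "0 < c"
    by (cases "c = 0") auto
  then obtain z where dz: "c * dist x z < norm (g x)" and "f z = a"
    using lipschitz_gradient_attains_nearby_value[OF deriv lip _ gap] by blast
  have "c * dist x z < c * infdist x C"
    using dz n_le by linarith
  then have dist_lt: "dist x z < infdist x C"
    using \<open>0 < c\<close> by simp
  have "norm (g z - g x) < norm (g x)"
    using lip[of z x] dz by (simp add: dist_norm norm_minus_commute)
  then have "z \<notin> C"
    using zero by auto
  then have "0 < infdist z C"
    using in_closed_iff_infdist_zero[OF \<open>closed C\<close> \<open>C \<noteq> {}\<close>] infdist_nonneg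
    by (metis less_eq_real_def)
  moreover have "infdist z C < e"
    using infdist_triangle[of z C x] dist_lt near by (simp add: dist_commute)
  ultimately show False
    using sep \<open>f z = a\<close> by blast
qed

theorem lemma4:
  fixes f :: "'a::euclidean_space \<Rightarrow> real"
    and g :: "'a \<Rightarrow> 'a"
    and c :: real
    and fv :: "'a set \<Rightarrow> real"
  assumes deriv: "\<And>x. (f has_derivative (\<lambda>h. g x \<bullet> h)) (at x)"
    and cont: "continuous_on UNIV g"
    and lip: "\<And>x y. norm (g x - g y) \<le> c * norm (x - y)"
    and bnd: "bounded {x. g x = 0}"
    and fin: "finite (components {x. g x = 0})"
    and const: "\<And>C x. C \<in> components {x. g x = 0} \<Longrightarrow> x \<in> C \<Longrightarrow> f x = fv C"
    and sep: "\<exists>e1>0. \<forall>C\<in>components {x. g x = 0}. \<forall>x.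
                 0 < infdist x C \<and> infdist x C < e1 \<longrightarrow> f x \<noteq> fv C"
  shows "\<exists>e0>0. \<forall>C\<in>components {x. g x = 0}. \<forall>x.
           infdist x C < e0 \<longrightarrow> (norm (g x))\<^sup>2 \<le> 2 * c * \<bar>f x - fv C\<bar>"
proof -
  obtain e1 where "0 < e1" and sep1: "\<forall>C\<in>components {x. g x = 0}. \<forall>x.
                 0 < infdist x C \<and> infdist x C < e1 \<longrightarrow> f x \<noteq> fv C"
    using sep by blast
  have "closed {x. g x = 0}"
    using cont by (simp add: closed_Collect_eq)
  then have "(norm (g x))\<^sup>2 \<le> 2 * c * \<bar>f x - fv C\<bar>"
    if "C \<in> components {x. g x = 0}" "infdist x C < e1 / 2" for C x
    using that sep1
    by (intro lipschitz_gradient_norm_sq_le_near_zero_set[OF deriv lip, where e = e1])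
      (auto simp: closed_components in_components_nonempty dest: in_components_subset)
  with \<open>0 < e1\<close> show ?thesis
    by (intro exI[of _ "e1 / 2"]) auto
qed

end
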